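(* Let $a\in\mathbb{R}$ with $|a|<1$, and let $c_k,s_k,\widetilde c_k,\widetilde s_k$ ($k\in\mathbb{N}$) be as follows: $c_k(x)=\sqrt2\cos(2k\pi x)$, $s_k(x)=\sqrt2\sin(2k\pi x)$, $\widehat c_k(x)=\sqrt{1-a^2}\sum_{n\ge0}a^nc_k(2^nx)$, $\widehat s_k(x)=\sqrt{1-a^2}\sum_{n\ge0}a^ns_k(2^nx)$, and $\widetilde c_i=\widehat c_i$, $\widetilde s_i=\widehat s_i$ for $i$ odd, $\widetilde c_i=\sqrt{1-a^2}\,\widehat c_i-a\,c_{i/2}$, $\widetilde s_i=\sqrt{1-a^2}\,\widehat s_i-a\,s_{i/2}$ for $i$ even. If $h\in L^2([0,1])$ has Fourier expansion $$h(x)=\alpha_0+\sum_{n=1}^\infty[\alpha_nc_n(x)+\beta_ns_n(x)],$$ then on $[0,1]$ it also has the expansion $$h(x)=\widetilde\alpha_0+\sum_{n=1}^\infty[\widetilde\alpha_n\widetilde c_n(x)+\widetilde\beta_n\widetilde s_n(x)],$$ where $\widetilde\alpha_0=\alpha_0$ and $$\widetilde\alpha_n=\begin{cases}\sqrt{1-a^2}\sum_{m=0}^\infty a^m\alpha_{n2^m} & n\text{ odd},\\ -a\,\alpha_{n/2}+(1-a^2)\sum_{m=0}^\infty a^m\alpha_{n2^m} & n\text{ even},\end{cases}\qquad \widetilde\beta_n=\begin{cases}\sqrt{1-a^2}\sum_{m=0}^\infty a^m\beta_{n2^m} & n\text{ odd},\\ -a\,\beta_{n/2}+(1-a^2)\sum_{m=0}^\infty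 a^m\beta_{n2^m} & n\text{ even}.\end{cases}$$
   Context: $L^2([0,1])$ carries the inner product $\langle f,h\rangle=\int_0^1fh\,dx$; $\{1,c_k,s_k\}$ and $\{1,\widetilde c_k,\widetilde s_k\}$ are complete orthonormal bases of $L^2([0,1])$, and the expansions are understood in $L^2([0,1])$. *)

theory Defs
  imports "HOL-Analysis.Analysis"
begin

definition cfun :: "nat \<Rightarrow> real \<Rightarrow> real" where
  "cfun k x = sqrt 2 * cos (2 * real k * pi * x)"

definition sfun :: "nat \<Rightarrow> real \<Rightarrow> real" where
  "sfun k x = sqrt 2 * sin (2 * real k * pi * x)"

definition chat :: "real \<Rightarrow> nat \<Rightarrow> real \<Rightarrow> real" where
  "chat a k x = sqrt (1 - a^2) * (\<Sum>n. a^n * cfun k (2^n * x))"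

definition shat :: "real \<Rightarrow> nat \<Rightarrow> real \<Rightarrow> real" where
  "shat a k x = sqrt (1 - a^2) * (\<Sum>n. a^n * sfun k (2^n * x))"

definition ctil :: "real \<Rightarrow> nat \<Rightarrow> real \<Rightarrow> real" where
  "ctil a i x = (if odd i then chat a i x
                 else sqrt (1 - a^2) * chat a i x - a * cfun (i div 2) x)"

definition stil :: "real \<Rightarrow> nat \<Rightarrow> real \<Rightarrow> real" where
  "stil a i x = (if odd i then shat a i x
                 else sqrt (1 - a^2) * shat a i x - a * sfun (i div 2) x)"

definition coef_til :: "real \<Rightarrow> (nat \<Rightarrow> real) \<Rightarrow> nat \<Rightarrow> real" where
  "coef_til a \<alpha> n = (if n = 0 then \<alpha> 0
     else if odd n then sqrt (1 - a^2) * (\<Sum>m. a^m * \<alpha> (n * 2^m))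
     else - a * \<alpha> (n div 2) + (1 - a^2) * (\<Sum>m. a^m * \<alpha> (n * 2^m)))"

definition L2_01 :: "(real \<Rightarrow> real) \<Rightarrow> bool" where
  "L2_01 h \<longleftrightarrow> h measurable_on {0..1} \<and> (\<lambda>x. (h x)^2) integrable_on {0..1}"

end

(* Write n = j 2^p with j odd, and G_p for the lacunary series sum_l a^l c_(j 2^(p+l)).
   Along such a dyadic chain <G_p, G_q> = a^|p-q| / (1 - a^2), and the transformed functions are
   sqrt(1 - a^2) G_0 and G_p - a G_(p-1) for p >= 1, i.e. the Gram-Schmidt orthonormalisation of
   the chain; chains belonging to different odd parts j (or to cosines versus sines) are
   orthogonal.  Hence {1, c~_n, s~_n} is orthonormal.  Since c_(j 2^M) = G_M - a G_(M+1), its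
   coefficients with respect to this system are explicit and their squares sum to 1, so the
   projection of every c_k, s_k onto the first N transformed functions is exact once N >= 2k.
   Trigonometric polynomials are dense in L^2[0,1] (truncate, approximate a.e. by periodic
   continuous functions, then apply Stone-Weierstrass on the circle), so the projections of any
   h converge to h in L^2; finally the coefficients in the statement are exactly the inner
   products of h with the transformed functions. *)

theory Submission
  imports Defs
begin

section \<open>Square-integrable functions on the unit interval\<close>

abbreviation I01 :: "real set" where "I01 \<equiv> {0..1}"

lemma measurable_on_I01_iff_borel:
  "f measurable_on I01 \<longleftrightarrow> f \<in> borel_measurable (lebesgue_on I01)" for f :: "real \<Rightarrow> real"
  by (rule measurable_on_iff_borel_measurable) simp

lemma integrable_on_I01_if_bounded:
  fixes f g :: "real \<Rightarrow> real"
  assumes "f measurable_on I01" "g integrable_on I01" "\<And>x. x \<in> I01 \<Longrightarrow> \<bar>f x\<bar> \<le> g x"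
  shows "f integrable_on I01"
  using measurable_bounded_by_integrable_imp_integrable_real[of f I01 g] assms
  by (auto simp: measurable_on_I01_iff_borel)

lemma continuous_on_imp_measurable_on_I01:
  "continuous_on I01 f \<Longrightarrow> f measurable_on I01" for f :: "real \<Rightarrow> real"
  using continuous_imp_measurable_on_sets_lebesgue[of I01 f] by (simp add: measurable_on_I01_iff_borel)

lemma L2_01_measurable: "L2_01 f \<Longrightarrow> f measurable_on I01"
  and L2_01_square_integrable: "L2_01 f \<Longrightarrow> (\<lambda>x. (f x)^2) integrable_on I01"
  by (simp_all add: L2_01_def)

lemma L2_01_mult_integrable:
  assumes "L2_01 f" "L2_01 g"
  shows "(\<lambda>x. f x * g x) integrable_on I01"
proof (rule integrable_on_I01_if_bounded)
  show "(\<lambda>x. f x * g x) measurable_on I01"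
    using assms L2_01_measurable measurable_on_bilinear[OF bilinear_times] by blast
  show "(\<lambda>x. ((f x)^2 + (g x)^2) / 2) integrable_on I01"
    using assms by (intro integrable_on_divide integrable_add L2_01_square_integrable)
  show "\<bar>f x * g x\<bar> \<le> ((f x)^2 + (g x)^2) / 2" for x
    using sum_squares_bound[of "\<bar>f x\<bar>" "\<bar>g x\<bar>"] by (simp add: abs_mult)
qed

lemma L2_01_const [simp]: "L2_01 (\<lambda>x. c)"
  by (simp add: L2_01_def integrable_const_ivl)

lemma L2_01_absolutely_integrable:
  assumes "L2_01 f"
  shows "f absolutely_integrable_on I01"
proof (rule measurable_bounded_by_integrable_imp_absolutely_integrable)
  show "f \<in> borel_measurable (lebesgue_on I01)"
    using assms L2_01_measurable measurable_on_I01_iff_borel by blast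
  show "(\<lambda>x. (1 + (f x)^2) / 2) integrable_on I01"
    using assms by (intro integrable_on_divide integrable_add L2_01_square_integrable)
      (simp_all add: integrable_const_ivl)
  show "norm (f x) \<le> (1 + (f x)^2) / 2" for x
    using sum_squares_bound[of 1 "\<bar>f x\<bar>"] by simp
qed simp

lemma L2_01_add:
  assumes "L2_01 f" "L2_01 g"
  shows "L2_01 (\<lambda>x. f x + g x)"
  unfolding L2_01_def
proof
  show "(\<lambda>x. f x + g x) measurable_on I01"
    using assms by (intro measurable_on_add L2_01_measurable)
  have "(\<lambda>x. (f x)^2 + (g x)^2 + 2 * (f x * g x)) integrable_on I01"
    using assms integrable_on_cmult_left[OF L2_01_mult_integrable[OF assms], of 2]
    by (intro integrable_add L2_01_square_integrable) simp_all
  then show "(\<lambda>x. (f x + g x)^2) integrable_on I01"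
    by (simp add: power2_sum mult.assoc)
qed

lemma L2_01_cmult: "L2_01 f \<Longrightarrow> L2_01 (\<lambda>x. c * f x)"
  unfolding L2_01_def power_mult_distrib
  using integrable_on_cmult_left[of "\<lambda>x. (f x)^2" I01 "c^2"]
  by (auto intro: measurable_on_cmul)

lemma L2_01_diff: "L2_01 f \<Longrightarrow> L2_01 g \<Longrightarrow> L2_01 (\<lambda>x. f x - g x)"
  using L2_01_add[of f "\<lambda>x. -1 * g x"] L2_01_cmult[of g "-1"] by simp

lemma L2_01_sum: "finite A \<Longrightarrow> (\<And>i. i \<in> A \<Longrightarrow> L2_01 (f i)) \<Longrightarrow> L2_01 (\<lambda>x. \<Sum>i\<in>A. f i x)"
  by (induction A rule: finite_induct) (auto intro: L2_01_add)

lemma L2_01_bounded: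
  assumes "f measurable_on I01" "\<And>x. x \<in> I01 \<Longrightarrow> \<bar>f x\<bar> \<le> B"
  shows "L2_01 f"
proof -
  have "(\<lambda>x. (f x)^2) integrable_on I01"
  proof (rule integrable_on_I01_if_bounded)
    show "(\<lambda>x. (f x)^2) measurable_on I01"
      using measurable_on_bilinear[OF bilinear_times assms(1) assms(1)] by (simp add: power2_eq_square)
    show "(\<lambda>x. B^2) integrable_on I01"
      by (rule integrable_const_ivl)
    show "\<bar>(f x)^2\<bar> \<le> B^2" if "x \<in> I01" for x
      using power_mono[OF assms(2)[OF that] abs_ge_zero, of 2] by simp
  qed
  then show ?thesis
    using assms(1) by (simp add: L2_01_def)
qed

lemma L2_01_continuous: "continuous_on I01 f \<Longrightarrow> L2_01 f"
proof -
  assume f: "continuous_on I01 f"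
  have "bounded (f ` I01)"
    by (intro compact_imp_bounded compact_continuous_image f) simp
  then obtain B where "\<forall>y\<in>f ` I01. norm y \<le> B"
    by (meson bounded_iff)
  then show ?thesis
    using L2_01_bounded[OF continuous_on_imp_measurable_on_I01[OF f], of B] by auto
qed

definition L2_inner :: "(real \<Rightarrow> real) \<Rightarrow> (real \<Rightarrow> real) \<Rightarrow> real" where
  "L2_inner f g = integral I01 (\<lambda>x. f x * g x)"

abbreviation L2_sqnorm :: "(real \<Rightarrow> real) \<Rightarrow> real" where
  "L2_sqnorm f \<equiv> L2_inner f f"

lemma integral_power2_eq_L2_sqnorm: "integral I01 (\<lambda>x. (f x)^2) = L2_sqnorm f"
  by (simp add: L2_inner_def power2_eq_square)

lemma L2_sqnorm_nonneg: "0 \<le> L2_sqnorm f"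
  unfolding L2_inner_def
  by (cases "(\<lambda>x. f x * f x) integrable_on I01") (auto intro: integral_nonneg simp: not_integrable_integral)

lemma L2_inner_commute: "L2_inner f g = L2_inner g f"
  by (simp add: L2_inner_def mult.commute)

lemma L2_inner_cmult_left: "L2_inner (\<lambda>x. c * f x) g = c * L2_inner f g"
  and L2_inner_cmult_right: "L2_inner f (\<lambda>x. c * g x) = c * L2_inner f g"
  by (simp_all add: L2_inner_def algebra_simps)

lemma L2_inner_add_left:
  "L2_01 f \<Longrightarrow> L2_01 g \<Longrightarrow> L2_01 u \<Longrightarrow> L2_inner (\<lambda>x. f x + g x) u = L2_inner f u + L2_inner g u"
  and L2_inner_diff_left:
  "L2_01 f \<Longrightarrow> L2_01 g \<Longrightarrow> L2_01 u \<Longrightarrow> L2_inner (\<lambda>x. f x - g x) u = L2_inner f u - L2_inner g u"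
  unfolding L2_inner_def using L2_01_mult_integrable[of f u] L2_01_mult_integrable[of g u]
  by (simp_all add: algebra_simps integral_add integral_diff)

lemma L2_inner_add_right:
  "L2_01 f \<Longrightarrow> L2_01 g \<Longrightarrow> L2_01 u \<Longrightarrow> L2_inner u (\<lambda>x. f x + g x) = L2_inner u f + L2_inner u g"
  and L2_inner_diff_right:
  "L2_01 f \<Longrightarrow> L2_01 g \<Longrightarrow> L2_01 u \<Longrightarrow> L2_inner u (\<lambda>x. f x - g x) = L2_inner u f - L2_inner u g"
  by (simp_all add: L2_inner_commute[of u] L2_inner_add_left L2_inner_diff_left)

lemma L2_inner_sum_right:
  "finite A \<Longrightarrow> (\<And>i. i \<in> A \<Longrightarrow> L2_01 (f i)) \<Longrightarrow> L2_01 u \<Longrightarrow>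
   L2_inner u (\<lambda>x. \<Sum>i\<in>A. f i x) = (\<Sum>i\<in>A. L2_inner u (f i))"
  unfolding L2_inner_def using L2_01_mult_integrable
  by (simp add: sum_distrib_left integral_sum)

lemma L2_sqnorm_add_le:
  assumes "L2_01 f" "L2_01 g"
  shows "L2_sqnorm (\<lambda>x. f x + g x) \<le> 2 * L2_sqnorm f + 2 * L2_sqnorm g"
proof -
  have "L2_sqnorm (\<lambda>x. f x + g x) + L2_sqnorm (\<lambda>x. f x - g x) = 2 * L2_sqnorm f + 2 * L2_sqnorm g"
    using assms
    by (simp add: L2_inner_add_left L2_inner_add_right L2_inner_diff_left L2_inner_diff_right
        L2_01_add L2_01_diff L2_inner_commute[of g f])
  then show ?thesis using L2_sqnorm_nonneg[of "\<lambda>x. f x - g x"] by linarith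
qed


section \<open>Orthogonal projections onto finite orthonormal families\<close>

definition L2_orthonormal :: "'i set \<Rightarrow> ('i \<Rightarrow> real \<Rightarrow> real) \<Rightarrow> bool" where
  "L2_orthonormal I u \<longleftrightarrow> (\<forall>i\<in>I. L2_01 (u i)) \<and>
     (\<forall>i\<in>I. \<forall>j\<in>I. L2_inner (u i) (u j) = (if i = j then 1 else 0))"

definition orth_proj :: "'i set \<Rightarrow> ('i \<Rightarrow> real \<Rightarrow> real) \<Rightarrow> (real \<Rightarrow> real) \<Rightarrow> real \<Rightarrow> real" where
  "orth_proj I u f x = (\<Sum>i\<in>I. L2_inner f (u i) * u i x)"

definition proj_err :: "'i set \<Rightarrow> ('i \<Rightarrow> real \<Rightarrow> real) \<Rightarrow> (real \<Rightarrow> real) \<Rightarrow> real" where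
  "proj_err I u f = L2_sqnorm (\<lambda>x. f x - orth_proj I u f x)"

lemma proj_err_nonneg: "0 \<le> proj_err I u f"
  unfolding proj_err_def by (rule L2_sqnorm_nonneg)

lemma L2_01_orth_proj:
  "finite I \<Longrightarrow> L2_orthonormal I u \<Longrightarrow> L2_01 (orth_proj I u f)"
  unfolding orth_proj_def L2_orthonormal_def by (auto intro!: L2_01_sum L2_01_cmult)

lemma L2_inner_orth_proj:
  assumes "finite I" "L2_orthonormal I u" "L2_01 g"
  shows "L2_inner g (orth_proj I u f) = (\<Sum>i\<in>I. L2_inner f (u i) * L2_inner g (u i))"
  using assms unfolding orth_proj_def L2_orthonormal_def
  by (simp add: L2_inner_sum_right L2_01_cmult L2_inner_cmult_right)

lemma L2_sqnorm_orth_proj: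
  assumes "finite I" "L2_orthonormal I u"
  shows "L2_sqnorm (orth_proj I u f) = (\<Sum>i\<in>I. (L2_inner f (u i))^2)"
proof -
  have coord: "L2_inner (orth_proj I u f) (u i) = L2_inner f (u i)" if i: "i \<in> I" for i
  proof -
    have "L2_inner (orth_proj I u f) (u i) = (\<Sum>j\<in>I. L2_inner f (u j) * L2_inner (u i) (u j))"
      using assms i unfolding L2_orthonormal_def
      by (simp add: L2_inner_commute[of "orth_proj I u f"] L2_inner_orth_proj[OF assms])
    also have "\<dots> = (\<Sum>j\<in>I. if j = i then L2_inner f (u j) else 0)"
      using assms i unfolding L2_orthonormal_def by (intro sum.cong) auto
    finally show ?thesis using assms(1) i by simp
  qed
  have "L2_sqnorm (orth_proj I u f)
      = (\<Sum>i\<in>I. L2_inner f (u i) * L2_inner (orth_proj I u f) (u i))"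
    by (rule L2_inner_orth_proj[OF assms L2_01_orth_proj[OF assms]])
  also have "\<dots> = (\<Sum>i\<in>I. (L2_inner f (u i))^2)"
    by (intro sum.cong) (simp_all add: coord power2_eq_square)
  finally show ?thesis .
qed

lemma proj_err_eq:
  assumes "finite I" "L2_orthonormal I u" "L2_01 f"
  shows "proj_err I u f = L2_sqnorm f - (\<Sum>i\<in>I. (L2_inner f (u i))^2)"
  using assms L2_01_orth_proj[OF assms(1,2)] L2_sqnorm_orth_proj[OF assms(1,2)]
    L2_inner_orth_proj[OF assms(1,2,3), of f]
  by (simp add: proj_err_def L2_inner_diff_left L2_inner_diff_right L2_01_diff
      L2_inner_commute[of "orth_proj I u f" f] power2_eq_square)

lemma proj_err_le_L2_sqnorm:
  "finite I \<Longrightarrow> L2_orthonormal I u \<Longrightarrow> L2_01 f \<Longrightarrow> proj_err I u f \<le> L2_sqnorm f"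
  by (simp add: proj_err_eq sum_nonneg)

lemma orth_proj_linear:
  assumes "finite I" "L2_orthonormal I u" "L2_01 f" "L2_01 g"
  shows "orth_proj I u (\<lambda>x. c * f x + d * g x) x = c * orth_proj I u f x + d * orth_proj I u g x"
  using assms unfolding orth_proj_def L2_orthonormal_def
  by (simp add: L2_inner_add_left L2_01_cmult L2_inner_cmult_left sum.distrib sum_distrib_left
      algebra_simps cong: sum.cong)

lemma proj_err_add_le:
  assumes "finite I" "L2_orthonormal I u" "L2_01 f" "L2_01 g"
  shows "proj_err I u (\<lambda>x. f x + g x) \<le> 2 * proj_err I u f + 2 * proj_err I u g"
proof -
  have eq: "(\<lambda>x. (f x + g x) - orth_proj I u (\<lambda>x. f x + g x) x)
      = (\<lambda>x. (f x - orth_proj I u f x) + (g x - orth_proj I u g x))"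
    using orth_proj_linear[OF assms, of 1 1] by (simp add: algebra_simps)
  have "proj_err I u (\<lambda>x. f x + g x)
      = L2_sqnorm (\<lambda>x. (f x - orth_proj I u f x) + (g x - orth_proj I u g x))"
    unfolding proj_err_def by (simp only: eq)
  also have "\<dots> \<le> 2 * proj_err I u f + 2 * proj_err I u g"
    unfolding proj_err_def
    by (intro L2_sqnorm_add_le L2_01_diff L2_01_orth_proj assms)
  finally show ?thesis .
qed

lemma proj_err_cmult:
  assumes "finite I" "L2_orthonormal I u" "L2_01 f"
  shows "proj_err I u (\<lambda>x. c * f x) = c^2 * proj_err I u f"
proof -
  have eq: "(\<lambda>x. c * f x - orth_proj I u (\<lambda>x. c * f x) x) = (\<lambda>x. c * (f x - orth_proj I u f x))"
    using orth_proj_linear[OF assms assms(3), of c 0] by (auto simp: algebra_simps)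
  have "proj_err I u (\<lambda>x. c * f x) = L2_sqnorm (\<lambda>x. c * (f x - orth_proj I u f x))"
    unfolding proj_err_def by (simp only: eq)
  then show ?thesis
    by (simp only: L2_inner_cmult_left L2_inner_cmult_right proj_err_def power2_eq_square mult.assoc)
qed


section \<open>The trigonometric system\<close>

definition trig :: "bool \<Rightarrow> nat \<Rightarrow> real \<Rightarrow> real" where
  "trig b k = (if b then cfun k else sfun k)"

lemma trig_eq_cos: "trig b k x = sqrt 2 * cos (2 * pi * real k * x - (if b then 0 else pi / 2))"
  by (simp add: trig_def cfun_def sfun_def cos_diff mult_ac)

lemma has_integral_cos_int:
  fixes k :: int
  shows "((\<lambda>x. cos (2 * pi * of_int k * x + \<theta>)) has_integral (if k = 0 then cos \<theta> else 0)) I01"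
proof (cases "k = 0")
  case True
  then show ?thesis using has_integral_const_real[of "cos \<theta>" 0 1] by simp
next
  case False
  define w where "w = 2 * pi * of_int k"
  have w: "w \<noteq> 0" using False by (simp add: w_def)
  have "((\<lambda>x. sin (w * x + \<theta>) / w) has_vector_derivative cos (w * x + \<theta>)) (at x within I01)" for x
    using w by (auto intro!: derivative_eq_intros simp: has_real_derivative_iff_has_vector_derivative[symmetric])
  then have "((\<lambda>x. cos (w * x + \<theta>)) has_integral (sin (w * 1 + \<theta>) / w - sin (w * 0 + \<theta>) / w)) I01"
    by (intro fundamental_theorem_of_calculus) auto
  moreover have "sin (w * 1 + \<theta>) = sin \<theta>"
    by (simp add: w_def sin_add)
  ultimately show ?thesis using False by (simp add: w_def)
qed

lemma continuous_on_trig: "continuous_on S (trig b k)"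
  unfolding trig_def cfun_def sfun_def by (auto intro!: continuous_intros)

lemma abs_trig_le: "\<bar>trig b k x\<bar> \<le> sqrt 2"
  unfolding trig_def cfun_def sfun_def by (auto simp: abs_mult)

lemma L2_01_trig: "L2_01 (trig b k)"
  by (intro L2_01_continuous continuous_on_trig)

lemma L2_inner_trig:
  assumes "k \<ge> 1" "m \<ge> 1"
  shows "L2_inner (trig b k) (trig b' m) = (if b = b' \<and> k = m then 1 else 0)"
proof -
  define \<phi> where "\<phi> b = (if b then 0 else pi / 2)" for b
  have prod: "trig b k x * trig b' m x
      = cos (2 * pi * of_int (int k - int m) * x + (\<phi> b' - \<phi> b))
        + cos (2 * pi * of_int (int k + int m) * x + (- \<phi> b - \<phi> b'))" for x
  proof -
    have "trig b k x * trig b' m x = 2 * (cos (2 * pi * k * x - \<phi> b) * cos (2 * pi * m * x - \<phi> b'))"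
      unfolding trig_eq_cos \<phi>_def[symmetric] by simp
    then show ?thesis
      unfolding cos_times_cos by (simp add: algebra_simps)
  qed
  have "((\<lambda>x. trig b k x * trig b' m x) has_integral
      (if int k - int m = 0 then cos (\<phi> b' - \<phi> b) else 0)
      + (if int k + int m = 0 then cos (- \<phi> b - \<phi> b') else 0)) I01"
    unfolding prod by (intro has_integral_add has_integral_cos_int)
  moreover have "(if int k - int m = 0 then cos (\<phi> b' - \<phi> b) else 0)
      + (if int k + int m = 0 then cos (- \<phi> b - \<phi> b') else 0) = (if b = b' \<and> k = m then 1 else 0)"
    using assms by (cases b; cases b') (simp_all add: \<phi>_def)
  ultimately have "((\<lambda>x. trig b k x * trig b' m x) has_integral (if b = b' \<and> k = m then 1 else 0)) I01"
    by (simp only:)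
  then show ?thesis
    unfolding L2_inner_def by (rule integral_unique)
qed

lemma L2_inner_const_trig:
  assumes "k \<ge> 1"
  shows "L2_inner (\<lambda>x. 1) (trig b k) = 0"
proof -
  have "((\<lambda>x. cos (2 * pi * of_int (int k) * x + - (if b then 0 else pi / 2))) has_integral 0) I01"
    using has_integral_cos_int[of "int k" "- (if b then 0 else pi / 2)"] assms by simp
  then have "((\<lambda>x. trig b k x) has_integral sqrt 2 * 0) I01"
    unfolding trig_eq_cos by (intro has_integral_mult_right) simp
  then show ?thesis
    unfolding L2_inner_def by (simp add: integral_unique)
qed

lemma L2_sqnorm_const_one: "L2_sqnorm (\<lambda>x. 1) = 1"
  by (simp add: L2_inner_def)


section \<open>Density of trigonometric polynomials\<close>

text \<open>Allowing integer frequencies and arbitrary phases makes closure under products a single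
  product-to-sum step.\<close>

inductive trig_poly :: "(real \<Rightarrow> real) \<Rightarrow> bool" where
  trig_poly_cos: "trig_poly (\<lambda>x. c * cos (2 * pi * of_int k * x + \<theta>))"
| trig_poly_add: "trig_poly f \<Longrightarrow> trig_poly g \<Longrightarrow> trig_poly (\<lambda>x. f x + g x)"

lemma trig_poly_const: "trig_poly (\<lambda>x. c)"
  using trig_poly_cos[of c 0 0] by simp

lemma trig_poly_mult_cos: "trig_poly f \<Longrightarrow> trig_poly (\<lambda>x. f x * (c * cos (2 * pi * of_int k * x + \<theta>)))"
proof (induction rule: trig_poly.induct)
  case (trig_poly_cos d m \<psi>)
  have "trig_poly (\<lambda>x. d * c / 2 * cos (2 * pi * of_int (m - k) * x + (\<psi> - \<theta>))
                     + d * c / 2 * cos (2 * pi * of_int (m + k) * x + (\<psi> + \<theta>)))"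
    by (intro trig_poly.intros)
  then show ?case
    by (simp add: cos_times_cos mult_ac algebra_simps add_divide_distrib)
next
  case (trig_poly_add f g)
  then show ?case using trig_poly.trig_poly_add by (simp add: distrib_right)
qed

lemma trig_poly_mult:
  assumes "trig_poly f" "trig_poly g"
  shows "trig_poly (\<lambda>x. f x * g x)"
  using assms(2)
proof induction
  case (trig_poly_cos c k \<theta>)
  show ?case by (rule trig_poly_mult_cos[OF assms(1)])
next
  case (trig_poly_add g1 g2)
  then show ?case using trig_poly.trig_poly_add by (simp add: distrib_left)
qed

lemma continuous_on_trig_poly: "trig_poly f \<Longrightarrow> continuous_on S f"
  by (induction rule: trig_poly.induct) (auto intro!: continuous_intros)

lemma L2_01_trig_poly: "trig_poly f \<Longrightarrow> L2_01 f"
  by (intro L2_01_continuous continuous_on_trig_poly)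

lemma cos_int_freq_eq_trig:
  fixes k :: int
  defines "n \<equiv> nat \<bar>k\<bar>"
  shows "cos (2 * pi * of_int k * x + \<theta>)
    = cos \<theta> / sqrt 2 * trig True n x - sgn (of_int k) * sin \<theta> / sqrt 2 * trig False n x"
proof (cases "k \<ge> 0")
  case True
  then have "of_int k = real n" by (simp add: n_def)
  then show ?thesis
    using True by (auto simp: trig_def cfun_def sfun_def cos_add algebra_simps sgn_if)
next
  case False
  then have "of_int k = - real n" by (simp add: n_def)
  then show ?thesis
    using False by (auto simp: trig_def cfun_def sfun_def cos_add cos_diff algebra_simps sgn_if)
qed

lemma L2_sqnorm_diff_le:
  assumes "L2_01 f" "L2_01 g" "L2_01 h"
  shows "L2_sqnorm (\<lambda>x. f x - h x) \<le> 2 * L2_sqnorm (\<lambda>x. f x - g x) + 2 * L2_sqnorm (\<lambda>x. g x - h x)"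
  using L2_sqnorm_add_le[OF L2_01_diff[OF assms(1,2)] L2_01_diff[OF assms(2,3)]] by simp

lemma L2_sqnorm_le_if_bounded:
  assumes "L2_01 f" "\<And>x. x \<in> I01 \<Longrightarrow> \<bar>f x\<bar> \<le> d"
  shows "L2_sqnorm f \<le> d^2"
proof -
  have "integral I01 (\<lambda>x. (f x)^2) \<le> integral I01 (\<lambda>x. d^2)"
    using assms power_mono[OF assms(2) abs_ge_zero, of _ 2]
    by (intro integral_le L2_01_square_integrable integrable_const_ivl) auto
  then show ?thesis
    by (simp add: integral_power2_eq_L2_sqnorm)
qed

lemma L2_sqnorm_diff_tendsto_zero:
  assumes "L2_01 f" "\<And>n. L2_01 (g n)" "d integrable_on I01"
    and "\<And>n x. x \<in> I01 \<Longrightarrow> (f x - g n x)^2 \<le> d x"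
    and "negligible N" "\<And>x. x \<in> I01 - N \<Longrightarrow> (\<lambda>n. g n x) \<longlonglongrightarrow> f x"
  shows "(\<lambda>n. L2_sqnorm (\<lambda>x. f x - g n x)) \<longlonglongrightarrow> 0"
proof -
  define D where "D n x = (if x \<in> N then 0 else (f x - g n x)^2)" for n x
  have sq_int: "(\<lambda>x. (f x - g n x)^2) integrable_on I01" for n
    using assms(1,2) by (intro L2_01_square_integrable L2_01_diff)
  have "D n integrable_on I01" for n
    by (rule integrable_spike[OF sq_int assms(5)]) (simp add: D_def)
  moreover have "norm (D n x) \<le> d x" if "x \<in> I01" for n x
    using assms(4)[OF that] order_trans[OF zero_le_power2 assms(4)[OF that]] by (simp add: D_def)
  moreover have "(\<lambda>n. D n x) \<longlonglongrightarrow> 0" if "x \<in> I01" for x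
  proof (cases "x \<in> N")
    case False
    then have "(\<lambda>n. (f x - g n x)^2) \<longlonglongrightarrow> (f x - f x)^2"
      using that assms(6) by (intro tendsto_intros) auto
    then show ?thesis using False by (simp add: D_def)
  qed (simp add: D_def)
  ultimately have "(\<lambda>n. integral I01 (D n)) \<longlonglongrightarrow> integral I01 (\<lambda>x. 0)"
    by (intro dominated_convergence(2)[OF _ assms(3)])
  moreover have "integral I01 (D n) = L2_sqnorm (\<lambda>x. f x - g n x)" for n
    using integral_spike[OF assms(5), of I01 "D n" "\<lambda>x. (f x - g n x)^2"]
    by (simp add: D_def integral_power2_eq_L2_sqnorm)
  ultimately show ?thesis by simp
qed

lemma tendsto_zero_obtain_less:
  fixes X :: "nat \<Rightarrow> real"
  assumes "X \<longlonglongrightarrow> 0" "0 < \<epsilon>"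
  obtains n where "X n < \<epsilon>"
  using order_tendstoD(2)[OF assms] by (auto simp: eventually_sequentially)

lemma truncation_approx:
  assumes h: "L2_01 h" and "0 < \<epsilon>"
  obtains M where "0 \<le> M" "L2_sqnorm (\<lambda>x. h x - max (- M) (min M (h x))) < \<epsilon>"
proof -
  have trunc_L2: "L2_01 (\<lambda>x. max (- M) (min M (h x)))" if "0 \<le> M" for M
  proof (rule L2_01_bounded)
    show "(\<lambda>x. max (- M) (min M (h x))) measurable_on I01"
      using L2_01_measurable[OF h] by (simp add: measurable_on_I01_iff_borel)
    show "\<bar>max (- M) (min M (h x))\<bar> \<le> M" for x
      using that by auto
  qed
  have "(\<lambda>n. L2_sqnorm (\<lambda>x. h x - max (- real n) (min (real n) (h x)))) \<longlonglongrightarrow> 0"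
  proof (rule L2_sqnorm_diff_tendsto_zero[OF h _ L2_01_square_integrable[OF h] _ negligible_empty])
    show "L2_01 (\<lambda>x. max (- real n) (min (real n) (h x)))" for n
      by (intro trunc_L2) simp
    show "(h x - max (- real n) (min (real n) (h x)))^2 \<le> (h x)^2" for n x
    proof -
      have "\<bar>h x - max (- real n) (min (real n) (h x))\<bar> \<le> \<bar>h x\<bar>" by auto
      then show ?thesis using power_mono[of _ "\<bar>h x\<bar>" 2] by fastforce
    qed
    show "(\<lambda>n. max (- real n) (min (real n) (h x))) \<longlonglongrightarrow> h x" for x
    proof (rule tendsto_eventually)
      obtain n0 :: nat where "\<bar>h x\<bar> \<le> real n0"
        using real_arch_simple by blast
      then show "\<forall>\<^sub>F n in sequentially. max (- real n) (min (real n) (h x)) = h x"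
        unfolding eventually_sequentially by (intro exI[of _ n0]) auto
    qed
  qed
  then obtain n where "L2_sqnorm (\<lambda>x. h x - max (- real n) (min (real n) (h x))) < \<epsilon>"
    using \<open>0 < \<epsilon>\<close> by (rule tendsto_zero_obtain_less)
  then show ?thesis by (intro that[of "real n"]) simp_all
qed

lemma ramp_tendsto_one:
  assumes "0 < x" "x < 1"
  shows "(\<lambda>n. max 0 (min 1 (min (real n * x) (real n * (1 - x))))) \<longlonglongrightarrow> 1"
proof (rule tendsto_eventually)
  obtain n0 :: nat where n0: "1 / x + 1 / (1 - x) \<le> real n0"
    using real_arch_simple by blast
  have "1 \<le> real n * x" "1 \<le> real n * (1 - x)" if "n0 \<le> n" for n
  proof -
    have "1 / x \<le> real n" "1 / (1 - x) \<le> real n"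
      using n0 that assms by (smt (verit) divide_pos_pos of_nat_mono)+
    then show "1 \<le> real n * x" "1 \<le> real n * (1 - x)"
      using assms by (simp_all add: divide_le_eq mult.commute)
  qed
  then show "\<forall>\<^sub>F n in sequentially. max 0 (min 1 (min (real n * x) (real n * (1 - x)))) = 1"
    unfolding eventually_sequentially by (intro exI[of _ n0]) auto
qed

text \<open>A bounded measurable function is the a.e. limit of continuous functions; clamping them
  keeps them bounded, and multiplying by a ramp vanishing at both ends makes them periodic.\<close>

lemma periodic_continuous_approx:
  assumes f: "f measurable_on I01" and bound: "\<And>x. \<bar>f x\<bar> \<le> M" and "0 < \<epsilon>"
  obtains g where "continuous_on I01 g" "g 0 = g 1" "L2_sqnorm (\<lambda>x. f x - g x) < \<epsilon>"
proof -
  obtain N h where N: "negligible N" and h_cont: "\<And>n. continuous_on UNIV (h n)"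
    and h_lim: "\<And>x. x \<notin> N \<Longrightarrow> (\<lambda>n. h n x) \<longlonglongrightarrow> (if x \<in> I01 then f x else 0)"
    using f unfolding measurable_on_def by blast
  define ramp where "ramp n x = max 0 (min 1 (min (real n * x) (real n * (1 - x))))" for n x
  define g where "g n x = ramp n x * max (- M) (min M (h n x))" for n x
  have M: "0 \<le> M" using bound[of 0] by simp
  have g_cont: "continuous_on I01 (g n)" for n
    unfolding g_def ramp_def
    by (intro continuous_intros continuous_on_subset[OF h_cont]) auto
  have g_bound: "\<bar>g n x\<bar> \<le> M" for n x
  proof -
    have "\<bar>g n x\<bar> = ramp n x * \<bar>max (- M) (min M (h n x))\<bar>"
      by (simp add: g_def ramp_def abs_mult)
    also have "\<dots> \<le> 1 * M"
      using M by (intro mult_mono) (auto simp: ramp_def)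
    finally show ?thesis by simp
  qed
  have "(\<lambda>n. L2_sqnorm (\<lambda>x. f x - g n x)) \<longlonglongrightarrow> 0"
  proof (rule L2_sqnorm_diff_tendsto_zero[where d = "\<lambda>x. (2 * M)^2" and N = "N \<union> {0, 1}"])
    show "L2_01 f" by (rule L2_01_bounded[OF f bound])
    show "L2_01 (g n)" for n by (rule L2_01_continuous[OF g_cont])
    show "(f x - g n x)^2 \<le> (2 * M)^2" for n x
      using bound[of x] g_bound[of n x] by (intro power2_le_iff_abs_le[THEN iffD2]) auto
    show "(\<lambda>n. g n x) \<longlonglongrightarrow> f x" if x: "x \<in> I01 - (N \<union> {0, 1})" for x
    proof -
      have "(\<lambda>n. max (- M) (min M (h n x))) \<longlonglongrightarrow> max (- M) (min M (f x))"
        using h_lim[of x] x by (intro tendsto_intros) auto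
      moreover have "(\<lambda>n. ramp n x) \<longlonglongrightarrow> 1"
        unfolding ramp_def using x by (intro ramp_tendsto_one) auto
      ultimately have "(\<lambda>n. g n x) \<longlonglongrightarrow> 1 * max (- M) (min M (f x))"
        unfolding g_def by (intro tendsto_mult)
      then show ?thesis using bound[of x] by simp
    qed
  qed (use N in \<open>simp_all add: integrable_const_ivl\<close>)
  then obtain n where "L2_sqnorm (\<lambda>x. f x - g n x) < \<epsilon>"
    using \<open>0 < \<epsilon>\<close> by (rule tendsto_zero_obtain_less)
  moreover have "g n 0 = g n 1" by (simp add: g_def ramp_def)
  ultimately show ?thesis using that[OF g_cont] by blast
qed

text \<open>A continuous function on \<open>[0,1]\<close> with equal end values is a continuous function on
  the circle, where the coordinates separate points and Stone-Weierstrass applies.\<close>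

definition circle_point :: "real \<Rightarrow> real \<times> real" where
  "circle_point t = (cos (2 * pi * t), sin (2 * pi * t))"

lemma continuous_on_circle_point: "continuous_on A circle_point"
  unfolding circle_point_def by (intro continuous_intros)

lemma circle_point_eq_imp:
  assumes "x \<in> I01" "y \<in> I01" "circle_point x = circle_point y"
  shows "x = y \<or> {x, y} = {0, 1}"
proof -
  obtain n :: int where "2 * pi * x = 2 * pi * y + 2 * pi * n"
    using assms(3) sin_cos_eq_iff by (auto simp: circle_point_def)
  then have "2 * pi * x = 2 * pi * (y + n)"
    by (simp add: distrib_left)
  then have "x = y + n"
    by simp
  moreover from this have "n = -1 \<or> n = 0 \<or> n = 1"
    using assms(1,2) by auto
  ultimately show ?thesis
    using assms(1,2) by auto
qed

lemma periodic_factors_through_circle: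
  fixes g :: "real \<Rightarrow> real"
  assumes g: "continuous_on I01 g" and "g 0 = g 1"
  obtains F where "continuous_on (circle_point ` I01) F" "\<And>t. t \<in> I01 \<Longrightarrow> F (circle_point t) = g t"
proof -
  let ?C = "top_of_set (circle_point ` I01)"
  have cont: "continuous_map (top_of_set I01) ?C circle_point"
    using continuous_on_circle_point by auto
  have "quotient_map (top_of_set I01) ?C circle_point"
  proof (rule continuous_closed_imp_quotient_map[OF cont])
    show "closed_map (top_of_set I01) ?C circle_point"
      by (intro continuous_imp_closed_map[OF cont] compact_space_subtopology
          Hausdorff_space_subtopology Hausdorff_space_euclidean)
        (simp add: compactin_euclidean_iff)
  qed simp
  then obtain F where "continuous_map ?C euclideanreal F"
    and "\<And>t. t \<in> I01 \<Longrightarrow> F (circle_point t) = g t"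
    using quotient_map_lift_exists[of _ _ circle_point euclideanreal g] g
      circle_point_eq_imp \<open>g 0 = g 1\<close>
    by (smt (verit) continuous_map_iff_continuous doubleton_eq_iff topspace_euclidean_subtopology)
  then show ?thesis using that by auto
qed

lemma trig_poly_uniform_approx:
  assumes "continuous_on I01 g" "g 0 = g 1" "0 < e"
  obtains q where "trig_poly q" "\<And>t. t \<in> I01 \<Longrightarrow> \<bar>g t - q t\<bar> < e"
proof -
  obtain F where F: "continuous_on (circle_point ` I01) F"
    and Fg: "\<And>t. t \<in> I01 \<Longrightarrow> F (circle_point t) = g t"
    using periodic_factors_through_circle[OF assms(1,2)] by blast
  define P where "P f \<longleftrightarrow> continuous_on (circle_point ` I01) f \<and> trig_poly (f \<circ> circle_point)"
    for f :: "real \<times> real \<Rightarrow> real"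
  have P_fst: "P fst" and P_snd: "P snd"
    using trig_poly_cos[of 1 1 0] trig_poly_cos[of 1 1 "- pi / 2"]
    by (auto simp: P_def o_def circle_point_def cos_diff intro: continuous_intros)
  have "\<exists>f. P f \<and> (\<forall>z\<in>circle_point ` I01. \<bar>F z - f z\<bar> < e)"
  proof (rule Stone_Weierstrass_HOL[OF _ _ _ _ _ _ F assms(3)])
    show "compact (circle_point ` I01)"
      by (intro compact_continuous_image continuous_on_circle_point) simp
    show "P (\<lambda>x. c)" for c
      by (simp add: P_def o_def trig_poly_const)
    show "P f \<and> P f' \<Longrightarrow> P (\<lambda>x. f x + f' x)" for f f'
      unfolding P_def o_def by (auto intro: continuous_on_add trig_poly_add)
    show "P f \<and> P f' \<Longrightarrow> P (\<lambda>x. f x * f' x)" for f f'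
      unfolding P_def o_def by (auto intro: continuous_on_mult trig_poly_mult)
    show "\<exists>f. P f \<and> f z \<noteq> f z'" if "z \<in> circle_point ` I01 \<and> z' \<in> circle_point ` I01 \<and> z \<noteq> z'" for z z'
      using that P_fst P_snd by (metis prod_eq_iff)
  qed (simp add: P_def)
  then obtain f where f: "P f" "\<And>z. z \<in> circle_point ` I01 \<Longrightarrow> \<bar>F z - f z\<bar> < e"
    by blast
  have "\<bar>g t - (f \<circ> circle_point) t\<bar> < e" if "t \<in> I01" for t
    using f(2)[of "circle_point t"] Fg[OF that] that by simp
  then show ?thesis
    using that[of "f \<circ> circle_point"] f(1) by (simp add: P_def)
qed

lemma trig_poly_dense:
  assumes h: "L2_01 h" and "0 < \<epsilon>"
  obtains q where "trig_poly q" "L2_sqnorm (\<lambda>x. h x - q x) < \<epsilon>"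
proof -
  obtain M where M: "0 \<le> M" "L2_sqnorm (\<lambda>x. h x - max (- M) (min M (h x))) < \<epsilon> / 16"
    using truncation_approx[OF h, of "\<epsilon> / 16"] \<open>0 < \<epsilon>\<close> by auto
  define t where "t x = max (- M) (min M (h x))" for x
  have t_meas: "t measurable_on I01"
    using L2_01_measurable[OF h] unfolding t_def by (simp add: measurable_on_I01_iff_borel)
  have t_bound: "\<bar>t x\<bar> \<le> M" for x
    using M(1) by (auto simp: t_def)
  obtain g where g: "continuous_on I01 g" "g 0 = g 1" "L2_sqnorm (\<lambda>x. t x - g x) < \<epsilon> / 16"
    using periodic_continuous_approx[OF t_meas t_bound, of "\<epsilon> / 16"] \<open>0 < \<epsilon>\<close> by auto
  obtain q where q: "trig_poly q" "\<And>x. x \<in> I01 \<Longrightarrow> \<bar>g x - q x\<bar> < sqrt (\<epsilon> / 8)"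
    using trig_poly_uniform_approx[OF g(1,2), of "sqrt (\<epsilon> / 8)"] \<open>0 < \<epsilon>\<close> by auto
  have L2: "L2_01 t" "L2_01 g" "L2_01 q"
    using L2_01_bounded[OF t_meas t_bound] L2_01_continuous[OF g(1)] L2_01_trig_poly[OF q(1)]
    by auto
  have "L2_sqnorm (\<lambda>x. g x - q x) \<le> (sqrt (\<epsilon> / 8))^2"
    using q(2) by (intro L2_sqnorm_le_if_bounded L2_01_diff L2 less_imp_le)
  then have "L2_sqnorm (\<lambda>x. g x - q x) \<le> \<epsilon> / 8"
    using \<open>0 < \<epsilon>\<close> by simp
  moreover have "L2_sqnorm (\<lambda>x. h x - g x) < \<epsilon> / 4"
    using L2_sqnorm_diff_le[OF h L2(1,2)] M(2) g(3) by (simp add: t_def)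
  ultimately have "L2_sqnorm (\<lambda>x. h x - q x) < \<epsilon>"
    using L2_sqnorm_diff_le[OF h L2(2,3)] \<open>0 < \<epsilon>\<close> by linarith
  with q(1) show ?thesis by (rule that)
qed

lemma eventually_proj_err_lincomb:
  assumes "\<And>N. finite (I N)" "\<And>N. L2_orthonormal (I N) u" "L2_01 f" "L2_01 g"
    and "eventually (\<lambda>N. proj_err (I N) u f = 0) sequentially"
    and "eventually (\<lambda>N. proj_err (I N) u g = 0) sequentially"
  shows "eventually (\<lambda>N. proj_err (I N) u (\<lambda>x. c * f x + d * g x) = 0) sequentially"
  using assms(5,6)
proof eventually_elim
  case (elim N)
  have "proj_err (I N) u (\<lambda>x. c * f x + d * g x)
      \<le> 2 * proj_err (I N) u (\<lambda>x. c * f x) + 2 * proj_err (I N) u (\<lambda>x. d * g x)"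
    using assms(1-4) by (intro proj_err_add_le L2_01_cmult)
  also have "\<dots> = 0"
    using elim assms(1-4) by (simp add: proj_err_cmult)
  finally show ?case
    using proj_err_nonneg by (intro antisym)
qed

lemma eventually_proj_err_trig_poly:
  assumes fin: "\<And>N. finite (I N)" and orth: "\<And>N. L2_orthonormal (I N) u"
    and const: "eventually (\<lambda>N. proj_err (I N) u (\<lambda>x. 1) = 0) sequentially"
    and trig: "\<And>b k. k \<ge> 1 \<Longrightarrow> eventually (\<lambda>N. proj_err (I N) u (trig b k) = 0) sequentially"
    and "trig_poly q"
  shows "eventually (\<lambda>N. proj_err (I N) u q = 0) sequentially"
proof -
  note lincomb = eventually_proj_err_lincomb[OF fin orth]
  have trig_all: "eventually (\<lambda>N. proj_err (I N) u (trig b n) = 0) sequentially" for b n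
  proof (cases "n = 0")
    case True
    have "trig b n = (\<lambda>x. (if b then sqrt 2 else 0) * 1 + 0 * 1)"
      using True by (auto simp: trig_def cfun_def sfun_def)
    then show ?thesis
      using lincomb[OF L2_01_const L2_01_const const const, of "if b then sqrt 2 else 0" 0]
      by (simp only:)
  qed (use trig in simp)
  show ?thesis
    using \<open>trig_poly q\<close>
  proof induction
    case (trig_poly_cos c k \<theta>)
    have "(\<lambda>x. c * cos (2 * pi * of_int k * x + \<theta>))
      = (\<lambda>x. (c * cos \<theta> / sqrt 2) * trig True (nat \<bar>k\<bar>) x
             + (- c * sgn (of_int k) * sin \<theta> / sqrt 2) * trig False (nat \<bar>k\<bar>) x)"
      unfolding cos_int_freq_eq_trig by (simp add: algebra_simps)
    then show ?case
      using lincomb[OF L2_01_trig L2_01_trig trig_all trig_all] by (simp only:)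
  next
    case (trig_poly_add f g)
    then show ?case
      using lincomb[where c = 1 and d = 1] L2_01_trig_poly by simp
  qed
qed

lemma proj_err_tendsto_zero:
  assumes fin: "\<And>N. finite (I N)" and orth: "\<And>N. L2_orthonormal (I N) u"
    and const: "eventually (\<lambda>N. proj_err (I N) u (\<lambda>x. 1) = 0) sequentially"
    and trig: "\<And>b k. k \<ge> 1 \<Longrightarrow> eventually (\<lambda>N. proj_err (I N) u (trig b k) = 0) sequentially"
    and h: "L2_01 h"
  shows "(\<lambda>N. proj_err (I N) u h) \<longlonglongrightarrow> 0"
proof (rule order_tendstoI)
  show "eventually (\<lambda>N. r < proj_err (I N) u h) sequentially" if "r < 0" for r
    using that proj_err_nonneg[of "I _" u h] by (intro always_eventually allI) (rule less_le_trans)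
  show "eventually (\<lambda>N. proj_err (I N) u h < r) sequentially" if "0 < r" for r
  proof -
    obtain q where q: "trig_poly q" "L2_sqnorm (\<lambda>x. h x - q x) < r / 4"
      using trig_poly_dense[OF h, of "r / 4"] \<open>0 < r\<close> by auto
    have hq: "L2_01 (\<lambda>x. h x - q x)" "L2_01 q"
      using h L2_01_trig_poly[OF q(1)] by (auto intro: L2_01_diff)
    have "eventually (\<lambda>N. proj_err (I N) u q = 0) sequentially"
      using fin orth const trig q(1) by (rule eventually_proj_err_trig_poly)
    then show ?thesis
    proof eventually_elim
      case (elim N)
      have "proj_err (I N) u h = proj_err (I N) u (\<lambda>x. (h x - q x) + q x)"
        by simp
      also have "\<dots> \<le> 2 * proj_err (I N) u (\<lambda>x. h x - q x) + 2 * proj_err (I N) u q"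
        by (rule proj_err_add_le[OF fin orth hq])
      also have "\<dots> \<le> 2 * L2_sqnorm (\<lambda>x. h x - q x)"
        using proj_err_le_L2_sqnorm[OF fin orth hq(1)] elim by simp
      finally show ?case
        using q(2) L2_sqnorm_nonneg[of "\<lambda>x. h x - q x"] by linarith
    qed
  qed
qed


section \<open>Lacunary series\<close>

lemma summable_mult_bounded:
  fixes w g :: "nat \<Rightarrow> real"
  assumes "summable (\<lambda>l. \<bar>w l\<bar>)" "\<And>l. \<bar>g l\<bar> \<le> B"
  shows "summable (\<lambda>l. w l * g l)"
proof (rule summable_comparison_test[where g = "\<lambda>l. B * \<bar>w l\<bar>"])
  have "norm (w l * g l) \<le> B * \<bar>w l\<bar>" for l
    using mult_right_mono[OF assms(2) abs_ge_zero, of l "w l"] by (simp add: abs_mult mult.commute)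
  then show "\<exists>N. \<forall>l\<ge>N. norm (w l * g l) \<le> B * \<bar>w l\<bar>"
    by blast
qed (use assms(1) in simp)

lemma abs_sum_mult_bounded_le:
  fixes w g :: "nat \<Rightarrow> real"
  assumes "summable (\<lambda>l. \<bar>w l\<bar>)" "\<And>l. \<bar>g l\<bar> \<le> B"
  shows "\<bar>\<Sum>l<m. w l * g l\<bar> \<le> B * (\<Sum>l. \<bar>w l\<bar>)"
proof -
  have "\<bar>\<Sum>l<m. w l * g l\<bar> \<le> (\<Sum>l<m. B * \<bar>w l\<bar>)"
    using mult_right_mono[OF assms(2) abs_ge_zero]
    by (intro order_trans[OF sum_abs] sum_mono) (simp add: abs_mult mult.commute[of "\<bar>w _\<bar>"])
  also have "\<dots> \<le> B * (\<Sum>l. \<bar>w l\<bar>)"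
    using assms(2)[of 0] by (simp add: sum_distrib_left[symmetric] mult_left_mono sum_le_suminf assms(1))
  finally show ?thesis .
qed

lemma abs_suminf_mult_bounded_le:
  fixes w g :: "nat \<Rightarrow> real"
  assumes "summable (\<lambda>l. \<bar>w l\<bar>)" "\<And>l. \<bar>g l\<bar> \<le> B"
  shows "\<bar>\<Sum>l. w l * g l\<bar> \<le> B * (\<Sum>l. \<bar>w l\<bar>)"
proof -
  have "(\<lambda>m. \<bar>\<Sum>l<m. w l * g l\<bar>) \<longlonglongrightarrow> \<bar>\<Sum>l. w l * g l\<bar>"
    by (intro tendsto_rabs summable_LIMSEQ summable_mult_bounded[OF assms])
  then show ?thesis
    by (rule LIMSEQ_le_const2) (use abs_sum_mult_bounded_le[OF assms] in auto)
qed

lemma sums_integral_mult_suminf: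
  fixes f :: "'a::euclidean_space \<Rightarrow> real" and g :: "nat \<Rightarrow> 'a \<Rightarrow> real"
  assumes S: "S \<in> sets lebesgue" and w: "summable (\<lambda>l. \<bar>w l\<bar>)"
    and f: "f absolutely_integrable_on S"
    and g: "\<And>l. g l \<in> borel_measurable (lebesgue_on S)" and bound: "\<And>l x. \<bar>g l x\<bar> \<le> B"
  shows "(\<lambda>l. w l * integral S (\<lambda>x. f x * g l x)) sums integral S (\<lambda>x. f x * (\<Sum>l. w l * g l x))"
proof -
  define W where "W = (\<Sum>l. \<bar>w l\<bar>)"
  define F where "F m x = (\<Sum>l<m. w l * (f x * g l x))" for m x
  have f_abs: "(\<lambda>x. \<bar>f x\<bar>) integrable_on S"
    using f by (simp add: absolutely_integrable_on_def)
  have fg: "(\<lambda>x. f x * g l x) integrable_on S" for l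
  proof (rule measurable_bounded_by_integrable_imp_integrable_real[OF _ _ _ S])
    show "(\<lambda>x. f x * g l x) \<in> borel_measurable (lebesgue_on S)"
      using absolutely_integrable_imp_borel_measurable[OF f S] g by measurable
    show "(\<lambda>x. B * \<bar>f x\<bar>) integrable_on S"
      using integrable_on_cmult_left[OF f_abs, of B] by simp
    show "\<bar>f x * g l x\<bar> \<le> B * \<bar>f x\<bar>" for x
      using mult_right_mono[OF bound abs_ge_zero, of l x "f x"] by (simp add: abs_mult mult.commute)
  qed
  have wfg: "(\<lambda>x. w l * (f x * g l x)) integrable_on S" for l
    using integrable_on_cmult_left[OF fg, of "w l"] by simp
  have "(\<lambda>m. integral S (F m)) \<longlonglongrightarrow> integral S (\<lambda>x. f x * (\<Sum>l. w l * g l x))"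
  proof (rule dominated_convergence(2))
    show "F m integrable_on S" for m
      unfolding F_def using wfg by (intro integrable_sum) auto
    show "(\<lambda>x. \<bar>f x\<bar> * (B * W)) integrable_on S"
      using integrable_on_cmult_right[OF f_abs, of "B * W"] by simp
    show "norm (F m x) \<le> \<bar>f x\<bar> * (B * W)" if "x \<in> S" for m x
    proof -
      have "F m x = f x * (\<Sum>l<m. w l * g l x)"
        by (simp add: F_def sum_distrib_left mult_ac)
      then show ?thesis
        using abs_sum_mult_bounded_le[OF w bound] by (simp add: abs_mult W_def mult_left_mono)
    qed
    show "(\<lambda>m. F m x) \<longlonglongrightarrow> f x * (\<Sum>l. w l * g l x)" for x
    proof -
      have "F m x = f x * (\<Sum>l<m. w l * g l x)" for m
        by (simp add: F_def sum_distrib_left mult_ac)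
      then show ?thesis
        using summable_LIMSEQ[OF summable_mult_bounded[OF w bound]] by (simp add: tendsto_mult_left)
    qed
  qed
  moreover have "integral S (F m) = (\<Sum>l<m. w l * integral S (\<lambda>x. f x * g l x))" for m
    unfolding F_def using wfg by (simp add: integral_sum)
  ultimately show ?thesis
    by (simp add: sums_def)
qed

definition lacunary :: "real \<Rightarrow> bool \<Rightarrow> nat \<Rightarrow> real \<Rightarrow> real" where
  "lacunary a b n x = (\<Sum>l. a^l * trig b (n * 2^l) x)"

lemma summable_abs_power: "\<bar>a\<bar> < 1 \<Longrightarrow> summable (\<lambda>l. \<bar>a ^ l\<bar>)" for a :: real
  by (simp add: power_abs summable_geometric)

lemma chat_eq_lacunary: "chat a n x = sqrt (1 - a^2) * lacunary a True n x"
  and shat_eq_lacunary: "shat a n x = sqrt (1 - a^2) * lacunary a False n x"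
  by (simp_all add: chat_def shat_def lacunary_def trig_def cfun_def sfun_def mult_ac)

lemma summable_lacunary: "\<bar>a\<bar> < 1 \<Longrightarrow> summable (\<lambda>l. a^l * trig b (n * 2^l) x)"
  by (intro summable_mult_bounded[OF summable_abs_power abs_trig_le])

lemma lacunary_rec:
  assumes "\<bar>a\<bar> < 1"
  shows "lacunary a b n x = trig b n x + a * lacunary a b (2 * n) x"
proof -
  have "(\<Sum>l. a^Suc l * trig b (n * 2^Suc l) x) = (\<Sum>l. a * (a^l * trig b (2 * n * 2^l) x))"
    by (simp add: mult_ac)
  also have "\<dots> = a * lacunary a b (2 * n) x"
    unfolding lacunary_def by (rule suminf_mult[OF summable_lacunary[OF assms]])
  finally have "(\<Sum>l. a^Suc l * trig b (n * 2^Suc l) x) = a * lacunary a b (2 * n) x" .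
  then show ?thesis
    using suminf_split_head[OF summable_lacunary[OF assms, of b n x]] by (simp add: lacunary_def)
qed

lemma L2_01_lacunary:
  assumes "\<bar>a\<bar> < 1"
  shows "L2_01 (lacunary a b n)"
proof (rule L2_01_bounded)
  show "lacunary a b n measurable_on I01"
    unfolding lacunary_def
    by (rule measurable_on_limit[where N = "{}" and f = "\<lambda>m x. \<Sum>l<m. a^l * trig b (n * 2^l) x"])
      (auto intro!: L2_01_measurable L2_01_sum L2_01_cmult L2_01_trig
        summable_LIMSEQ summable_lacunary assms)
  show "\<bar>lacunary a b n x\<bar> \<le> sqrt 2 * (\<Sum>l. \<bar>a ^ l\<bar>)" for x
    unfolding lacunary_def by (intro abs_suminf_mult_bounded_le summable_abs_power assms abs_trig_le)
qed

lemma L2_inner_lacunary_sums: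
  assumes "\<bar>a\<bar> < 1" "L2_01 f"
  shows "(\<lambda>l. a^l * L2_inner f (trig b (n * 2^l))) sums L2_inner f (lacunary a b n)"
  unfolding L2_inner_def lacunary_def
  using L2_01_measurable[OF L2_01_trig]
  by (intro sums_integral_mult_suminf[where B = "sqrt 2"] summable_abs_power
      L2_01_absolutely_integrable abs_trig_le assms)
    (auto simp: measurable_on_I01_iff_borel)

lemma L2_inner_const_lacunary:
  assumes "\<bar>a\<bar> < 1" "n \<ge> 1"
  shows "L2_inner (\<lambda>x. 1) (lacunary a b n) = 0"
proof -
  have "L2_inner (\<lambda>x. 1) (trig b (n * 2^l)) = 0" for l
    using assms(2) by (intro L2_inner_const_trig) (simp add: Suc_le_eq)
  then have "(\<lambda>l. 0) sums L2_inner (\<lambda>x. 1) (lacunary a b n)"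
    using L2_inner_lacunary_sums[OF assms(1) L2_01_const, of 1 b n] by simp
  then show ?thesis
    using sums_zero by (rule sums_unique2)
qed

lemma odd_times_power2_exists:
  fixes n :: nat
  assumes "n \<ge> 1"
  obtains j p where "odd j" "n = j * 2^p"
  using assms
proof (induction n arbitrary: thesis rule: less_induct)
  case (less n)
  show ?case
  proof (cases "odd n")
    case True
    then show ?thesis using less.prems(1)[of n 0] by simp
  next
    case False
    then obtain m where m: "n = 2 * m" by blast
    with less.prems(2) have "m \<ge> 1" "m < n" by auto
    then obtain j p where "odd j" "m = j * 2^p" using less.IH by blast
    then show ?thesis using less.prems(1)[of j "Suc p"] m by simp
  qed
qed

lemma odd_times_power2_eq_iff:
  fixes j j' :: nat
  assumes "odd j" "odd j'"
  shows "j * 2^r = j' * 2^s \<longleftrightarrow> j = j' \<and> r = s"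
proof -
  have key: "j = j' \<and> r = s" if "r \<le> s" "odd j" "odd j'" "j * 2^r = j' * 2^s" for j j' r s :: nat
  proof -
    have "j * 2^r = (j' * 2^(s - r)) * 2^r"
      using that by (simp add: mult.assoc power_add[symmetric])
    then have j: "j = j' * 2^(s - r)" by simp
    then have "s - r = 0" using that(2) by (cases "s - r") auto
    then show ?thesis using j that(1) by simp
  qed
  show ?thesis
  proof
    assume eq: "j * 2^r = j' * 2^s"
    show "j = j' \<and> r = s"
    proof (cases "r \<le> s")
      case True
      show ?thesis using key[OF True assms eq] .
    next
      case False
      then show ?thesis using key[of s r j' j] assms eq by simp
    qed
  qed simp
qed

lemma odd_times_power2_ge_1: "odd j \<Longrightarrow> j * 2^p \<ge> (1 :: nat)"
  using odd_pos[of j] by (simp add: Suc_le_eq)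

lemma L2_inner_trig_lacunary:
  assumes a: "\<bar>a\<bar> < 1" and j: "odd j" "odd j'"
  shows "L2_inner (trig b (j * 2^r)) (lacunary a b' (j' * 2^p))
    = (if b = b' \<and> j = j' \<and> p \<le> r then a^(r - p) else 0)" (is "_ = ?v")
proof -
  have "(\<lambda>l. a^l * L2_inner (trig b (j * 2^r)) (trig b' (j' * 2^(p + l))))
      sums L2_inner (trig b (j * 2^r)) (lacunary a b' (j' * 2^p))"
    using L2_inner_lacunary_sums[OF a L2_01_trig[of b "j * 2^r"], of b' "j' * 2^p"]
    by (simp add: power_add mult.assoc)
  moreover have "a^l * L2_inner (trig b (j * 2^r)) (trig b' (j' * 2^(p + l)))
      = (if l = r - p then ?v else 0)" for l
  proof -
    have "L2_inner (trig b (j * 2^r)) (trig b' (j' * 2^(p + l)))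
        = (if b = b' \<and> j = j' \<and> r = p + l then 1 else 0)"
      using L2_inner_trig[OF odd_times_power2_ge_1[OF j(1)] odd_times_power2_ge_1[OF j(2)]]
        odd_times_power2_eq_iff[OF j] by simp
    then show ?thesis by (cases "b = b' \<and> j = j' \<and> r = p + l") auto
  qed
  ultimately have "(\<lambda>l. if l = r - p then ?v else 0) sums L2_inner (trig b (j * 2^r)) (lacunary a b' (j' * 2^p))"
    by (simp only:)
  then show ?thesis
    using sums_single[of "r - p" "\<lambda>_. ?v"] by (rule sums_unique2)
qed

lemma L2_inner_lacunary_lacunary_le:
  assumes a: "\<bar>a\<bar> < 1" and j: "odd j" "odd j'" and "p \<le> q"
  shows "L2_inner (lacunary a b (j * 2^p)) (lacunary a b' (j' * 2^q))
    = (if b = b' \<and> j = j' then a^(q - p) / (1 - a^2) else 0)"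
proof -
  have "(\<lambda>l. a^l * L2_inner (trig b' (j' * 2^(q + l))) (lacunary a b (j * 2^p)))
      sums L2_inner (lacunary a b (j * 2^p)) (lacunary a b' (j' * 2^q))"
    using L2_inner_lacunary_sums[OF a L2_01_lacunary[OF a, of b "j * 2^p"], of b' "j' * 2^q"]
    by (simp add: power_add mult.assoc L2_inner_commute[of "lacunary a b (j * 2^p)"])
  moreover have "a^l * L2_inner (trig b' (j' * 2^(q + l))) (lacunary a b (j * 2^p))
      = (if b = b' \<and> j = j' then a^(q - p) * (a^2)^l else 0)" for l
  proof -
    have "l + (q + l - p) = (q - p) + 2 * l"
      using \<open>p \<le> q\<close> by simp
    then have "a^l * a^(q + l - p) = a^(q - p) * (a^2)^l"
      by (metis power_add power_mult)
    then show ?thesis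
      using \<open>p \<le> q\<close> by (auto simp: L2_inner_trig_lacunary[OF a j(2,1)])
  qed
  moreover have "(\<lambda>l. a^(q - p) * (a^2)^l) sums (a^(q - p) * (1 / (1 - a^2)))"
    using a by (intro sums_mult geometric_sums) (simp add: abs_square_less_1)
  ultimately show ?thesis
    by (cases "b = b' \<and> j = j'") (auto simp: sums_iff)
qed

lemma L2_inner_lacunary_lacunary:
  assumes a: "\<bar>a\<bar> < 1" and j: "odd j" "odd j'"
  shows "L2_inner (lacunary a b (j * 2^p)) (lacunary a b' (j' * 2^q))
    = (if b = b' \<and> j = j' then a^(if p \<le> q then q - p else p - q) / (1 - a^2) else 0)"
proof (cases "p \<le> q")
  case True
  then show ?thesis using L2_inner_lacunary_lacunary_le[OF a j True] by simp
next
  case False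
  then show ?thesis
    using L2_inner_lacunary_lacunary_le[OF a j(2,1), of q p b' b]
    by (auto simp: L2_inner_commute[of "lacunary a b (j * 2^p)"])
qed


section \<open>The transformed system\<close>

definition tilde :: "real \<Rightarrow> bool \<Rightarrow> nat \<Rightarrow> real \<Rightarrow> real" where
  "tilde a b = (if b then ctil a else stil a)"

lemma sqrt_one_minus_square: "\<bar>a\<bar> < 1 \<Longrightarrow> sqrt (1 - a^2) * sqrt (1 - a^2) = 1 - a^2"
  by (simp add: abs_square_less_1 less_imp_le)

lemma tilde_odd: "odd n \<Longrightarrow> tilde a b n x = sqrt (1 - a^2) * lacunary a b n x"
  by (simp add: tilde_def ctil_def stil_def chat_eq_lacunary shat_eq_lacunary)

lemma tilde_even:
  assumes "\<bar>a\<bar> < 1" "even n"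
  shows "tilde a b n x = (1 - a^2) * lacunary a b n x - a * trig b (n div 2) x"
  using assms sqrt_one_minus_square[OF assms(1)]
  by (simp add: tilde_def ctil_def stil_def chat_eq_lacunary shat_eq_lacunary trig_def mult.assoc[symmetric])

text \<open>This is the Gram-Schmidt step along the dyadic chain through \<open>n\<close>: the right-hand side is
  orthogonal to every lacunary series lower in the chain.\<close>

lemma tilde_even_eq_lacunary:
  assumes "\<bar>a\<bar> < 1" "even n"
  shows "tilde a b n x = lacunary a b n x - a * lacunary a b (n div 2) x"
  using tilde_even[OF assms] lacunary_rec[OF assms(1), of b "n div 2" x] assms(2)
  by (simp add: algebra_simps power2_eq_square)

lemma L2_01_tilde:
  assumes "\<bar>a\<bar> < 1"
  shows "L2_01 (tilde a b n)"
proof (cases "even n")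
  case True
  have "tilde a b n = (\<lambda>x. (1 - a^2) * lacunary a b n x - a * trig b (n div 2) x)"
    using tilde_even[OF assms True] by (simp add: fun_eq_iff)
  then show ?thesis
    by (simp only:) (intro L2_01_diff L2_01_cmult L2_01_lacunary L2_01_trig assms)
next
  case False
  have "tilde a b n = (\<lambda>x. sqrt (1 - a^2) * lacunary a b n x)"
    using tilde_odd[OF False] by (simp add: fun_eq_iff)
  then show ?thesis
    by (simp only:) (intro L2_01_cmult L2_01_lacunary assms)
qed

lemma tilde_odd_times_power2_0:
  "odd j \<Longrightarrow> tilde a b (j * 2^0) = (\<lambda>x. sqrt (1 - a^2) * lacunary a b (j * 2^0) x)"
  by (simp add: fun_eq_iff tilde_odd)

lemma tilde_odd_times_power2_Suc:
  "\<bar>a\<bar> < 1 \<Longrightarrow> tilde a b (j * 2^Suc p) = (\<lambda>x. lacunary a b (j * 2^Suc p) x - a * lacunary a b (j * 2^p) x)"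
  by (simp add: fun_eq_iff tilde_even_eq_lacunary)

lemma L2_inner_tilde_lacunary:
  assumes a: "\<bar>a\<bar> < 1" and j: "odd j" "odd j'"
  shows "L2_inner (tilde a b (j * 2^p)) (lacunary a b' (j' * 2^q))
    = (if b = b' \<and> j = j' \<and> p \<le> q then a^(q - p) * (if p = 0 then 1 / sqrt (1 - a^2) else 1) else 0)"
proof -
  have A: "0 < 1 - a^2" using a by (simp add: abs_square_less_1)
  note LL = L2_inner_lacunary_lacunary[OF a j]
  show ?thesis
  proof (cases p)
    case 0
    have "sqrt (1 - a^2) * (a^q / (1 - a^2)) = a^q * (1 / sqrt (1 - a^2))"
      using A by (simp add: field_simps real_sqrt_pow2[symmetric] power2_eq_square del: real_sqrt_pow2)
    then show ?thesis
      unfolding 0 tilde_odd_times_power2_0[OF j(1)] L2_inner_cmult_left LL by simp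
  next
    case (Suc p')
    have "L2_inner (tilde a b (j * 2^p)) (lacunary a b' (j' * 2^q))
        = L2_inner (lacunary a b (j * 2^p)) (lacunary a b' (j' * 2^q))
          - a * L2_inner (lacunary a b (j * 2^p')) (lacunary a b' (j' * 2^q))"
      unfolding Suc tilde_odd_times_power2_Suc[OF a]
      by (simp add: L2_inner_diff_left L2_inner_cmult_left L2_01_cmult L2_01_lacunary a)
    also have "\<dots> = (if b = b' \<and> j = j'
        then (a^(if p \<le> q then q - p else p - q) - a * a^(if p' \<le> q then q - p' else p' - q))
          / (1 - a^2) else 0)"
      unfolding LL by (simp add: diff_divide_distrib)
    also have "\<dots> = (if b = b' \<and> j = j' \<and> p \<le> q then a^(q - p) else 0)"
    proof (cases "p \<le> q")
      case True
      then have "q - p' = Suc (q - p)"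
        using Suc by simp
      then have "a^(q - p) - a * a^(q - p') = a^(q - p) * (1 - a^2)"
        by (simp add: power2_eq_square algebra_simps)
      then show ?thesis
        using True Suc A by simp
    next
      case False
      then have "(if p' \<le> q then q - p' else p' - q) = p' - q" "a * a^(p' - q) = a^(p - q)"
        using Suc by (auto simp: Suc_diff_le)
      then show ?thesis
        using False by simp
    qed
    finally show ?thesis using Suc by simp
  qed
qed

lemma L2_inner_tilde_tilde:
  assumes a: "\<bar>a\<bar> < 1" and "n \<ge> 1" "m \<ge> 1"
  shows "L2_inner (tilde a b n) (tilde a b' m) = (if b = b' \<and> n = m then 1 else 0)"
proof -
  obtain j p where j: "odd j" "n = j * 2^p"
    using odd_times_power2_exists[OF \<open>n \<ge> 1\<close>] .
  obtain j' q where j': "odd j'" "m = j' * 2^q"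
    using odd_times_power2_exists[OF \<open>m \<ge> 1\<close>] .
  have A: "0 < 1 - a^2" using a by (simp add: abs_square_less_1)
  note TL = L2_inner_tilde_lacunary[OF a j(1) j'(1), of b p b']
  have "L2_inner (tilde a b (j * 2^p)) (tilde a b' (j' * 2^q))
      = (if b = b' \<and> j = j' \<and> p = q then 1 else 0)"
  proof (cases q)
    case 0
    then show ?thesis
      unfolding 0 tilde_odd_times_power2_0[OF j'(1)] L2_inner_cmult_right TL
      using A by auto
  next
    case (Suc q')
    have "L2_inner (tilde a b (j * 2^p)) (tilde a b' (j' * 2^q))
        = L2_inner (tilde a b (j * 2^p)) (lacunary a b' (j' * 2^q))
          - a * L2_inner (tilde a b (j * 2^p)) (lacunary a b' (j' * 2^q'))"
      unfolding Suc tilde_odd_times_power2_Suc[OF a]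
      by (simp add: L2_inner_diff_right L2_inner_cmult_right L2_01_cmult L2_01_lacunary L2_01_tilde a)
    also have "\<dots> = (if b = b' \<and> j = j'
        then (if p = 0 then 1 / sqrt (1 - a^2) else 1)
          * ((if p \<le> q then a^(q - p) else 0) - a * (if p \<le> q' then a^(q' - p) else 0))
        else 0)"
      unfolding TL by (auto simp: algebra_simps)
    also have "\<dots> = (if b = b' \<and> j = j' \<and> p = q then 1 else 0)"
    proof (cases "p \<le> q'")
      case True
      then have "q - p = Suc (q' - p)" using Suc by simp
      then show ?thesis using True Suc by auto
    qed (use Suc in auto)
    finally show ?thesis .
  qed
  then show ?thesis
    using j j' odd_times_power2_eq_iff[OF j(1) j'(1)] by simp
qed

definition trig_tilde_coeff :: "real \<Rightarrow> nat \<Rightarrow> nat \<Rightarrow> real" where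
  "trig_tilde_coeff a M p = (if p = 0 then sqrt (1 - a^2) * a^M
     else if p \<le> M then (1 - a^2) * a^(M - p) else if p = Suc M then - a else 0)"

lemma L2_inner_trig_tilde:
  assumes a: "\<bar>a\<bar> < 1" and j: "odd j" "odd j'"
  shows "L2_inner (trig b (j * 2^M)) (tilde a b' (j' * 2^p))
    = (if b = b' \<and> j = j' then trig_tilde_coeff a M p else 0)"
proof (cases p)
  case 0
  then show ?thesis
    unfolding 0 tilde_odd_times_power2_0[OF j(2)] L2_inner_cmult_right L2_inner_trig_lacunary[OF a j]
    by (simp add: trig_tilde_coeff_def)
next
  case (Suc p')
  have "L2_inner (trig b (j * 2^M)) (tilde a b' (j' * 2^p))
      = L2_inner (trig b (j * 2^M)) (lacunary a b' (j' * 2^p))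
        - a * L2_inner (trig b (j * 2^M)) (lacunary a b' (j' * 2^p'))"
    unfolding Suc tilde_odd_times_power2_Suc[OF a]
    by (simp add: L2_inner_diff_right L2_inner_cmult_right L2_01_cmult L2_01_lacunary L2_01_trig a)
  also have "\<dots> = (if b = b' \<and> j = j'
      then (if p \<le> M then a^(M - p) else 0) - a * (if p' \<le> M then a^(M - p') else 0) else 0)"
    unfolding L2_inner_trig_lacunary[OF a j] by auto
  also have "\<dots> = (if b = b' \<and> j = j' then trig_tilde_coeff a M p else 0)"
  proof (cases "p \<le> M")
    case True
    then have "M - p' = Suc (M - p)" using Suc by simp
    then show ?thesis
      using True Suc by (simp add: trig_tilde_coeff_def algebra_simps power2_eq_square)
  qed (use Suc in \<open>auto simp: trig_tilde_coeff_def\<close>)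
  finally show ?thesis .
qed

lemma sum_trig_tilde_coeff_sq:
  assumes "\<bar>a\<bar> < 1"
  shows "(\<Sum>p\<le>Suc M. (trig_tilde_coeff a M p)^2) = 1"
proof -
  have init: "(\<Sum>p\<le>M. (trig_tilde_coeff a M p)^2) = 1 - a^2" for M
  proof (induction M)
    case 0
    then show ?case
      using assms by (simp add: trig_tilde_coeff_def abs_square_less_1 less_imp_le)
  next
    case (Suc M)
    have "(\<Sum>p\<le>M. (trig_tilde_coeff a (Suc M) p)^2) = (\<Sum>p\<le>M. a^2 * (trig_tilde_coeff a M p)^2)"
      by (intro sum.cong) (auto simp: trig_tilde_coeff_def Suc_diff_le power_mult_distrib power2_eq_square)
    also have "\<dots> = a^2 * (1 - a^2)"
      using Suc by (simp add: sum_distrib_left[symmetric])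
    finally show ?case
      by (simp add: trig_tilde_coeff_def power2_eq_square algebra_simps)
  qed
  show ?thesis
    using init[of M] by (simp add: trig_tilde_coeff_def)
qed

lemma sum_L2_inner_trig_tilde_sq:
  assumes a: "\<bar>a\<bar> < 1" and "k \<ge> 1" "2 * k \<le> N"
  shows "(\<Sum>n\<in>{1..N}. (L2_inner (trig b k) (tilde a True n))^2
                      + (L2_inner (trig b k) (tilde a False n))^2) = 1"
proof -
  obtain j M where j: "odd j" "k = j * 2^M"
    using odd_times_power2_exists[OF \<open>k \<ge> 1\<close>] .
  define w where "w n = (L2_inner (trig b k) (tilde a True n))^2 + (L2_inner (trig b k) (tilde a False n))^2"
    for n
  define C where "C = (\<lambda>p. j * 2^p) ` {..Suc M}"
  have w_chain: "w (j * 2^p) = (trig_tilde_coeff a M p)^2" for p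
    unfolding w_def j(2) L2_inner_trig_tilde[OF a j(1) j(1)] by (cases b) auto
  have "w n = 0" if "n \<in> {1..N} - C" for n
  proof -
    from that have "n \<ge> 1" by simp
    then obtain j' p where j': "odd j'" "n = j' * 2^p"
      by (rule odd_times_power2_exists)
    show ?thesis
    proof (cases "j' = j")
      case True
      then have "p > Suc M" using that j' by (auto simp: C_def not_le[symmetric])
      then show ?thesis using w_chain[of p] j' True by (simp add: trig_tilde_coeff_def)
    qed (simp add: w_def j' j(2) L2_inner_trig_tilde[OF a j(1) j'(1)])
  qed
  moreover have "C \<subseteq> {1..N}"
  proof
    fix n assume "n \<in> C"
    then obtain p where p: "p \<le> Suc M" "n = j * 2^p" by (auto simp: C_def)
    have "n \<le> j * 2^Suc M"
      unfolding p(2) using p(1) by (intro mult_left_mono power_increasing) auto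
    also have "\<dots> = 2 * k" by (simp add: j(2))
    finally show "n \<in> {1..N}"
      using \<open>2 * k \<le> N\<close> odd_times_power2_ge_1[OF j(1), of p] p(2) by auto
  qed
  ultimately have "(\<Sum>n\<in>{1..N}. w n) = (\<Sum>n\<in>C. w n)"
    by (intro sum.mono_neutral_right) auto
  also have "\<dots> = (\<Sum>p\<le>Suc M. w (j * 2^p))"
    unfolding C_def using odd_times_power2_eq_iff[OF j(1) j(1)]
    by (intro sum.reindex_cong[where l = "\<lambda>p. j * 2^p"]) (auto simp: inj_on_def)
  also have "\<dots> = 1"
    unfolding w_chain by (rule sum_trig_tilde_coeff_sq[OF a])
  finally show ?thesis by (simp add: w_def)
qed

definition tilde_index :: "nat \<Rightarrow> (nat \<times> bool) set" where
  "tilde_index N = insert (0, True) ({1..N} \<times> UNIV)"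

definition tilde_family :: "real \<Rightarrow> nat \<times> bool \<Rightarrow> real \<Rightarrow> real" where
  "tilde_family a i = (if fst i = 0 then (\<lambda>x. 1) else tilde a (snd i) (fst i))"

lemma finite_tilde_index: "finite (tilde_index N)"
  by (simp add: tilde_index_def)

lemma sum_tilde_index:
  "(\<Sum>i\<in>tilde_index N. F i) = F (0, True) + (\<Sum>n\<in>{1..N}. F (n, True) + F (n, False))"
proof -
  have "(\<Sum>i\<in>tilde_index N. F i) = F (0, True) + (\<Sum>(n, b)\<in>{1..N} \<times> UNIV. F (n, b))"
    unfolding tilde_index_def by (subst sum.insert) auto
  also have "(\<Sum>(n, b)\<in>{1..N} \<times> UNIV. F (n, b)) = (\<Sum>n\<in>{1..N}. \<Sum>b\<in>UNIV. F (n, b))"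
    by (rule sum.cartesian_product[symmetric])
  finally show ?thesis
    by (simp add: UNIV_bool add.commute)
qed

lemma L2_inner_const_tilde:
  assumes a: "\<bar>a\<bar> < 1" and "n \<ge> 1"
  shows "L2_inner (\<lambda>x. 1) (tilde a b n) = 0"
proof (cases "even n")
  case True
  then have "n div 2 \<ge> 1" using \<open>n \<ge> 1\<close> by auto
  have "tilde a b n = (\<lambda>x. (1 - a^2) * lacunary a b n x - a * trig b (n div 2) x)"
    using tilde_even[OF a True] by (simp add: fun_eq_iff)
  then show ?thesis
    using \<open>n div 2 \<ge> 1\<close> \<open>n \<ge> 1\<close>
    by (simp add: L2_inner_diff_right L2_inner_cmult_right L2_01_cmult L2_01_lacunary L2_01_trig a
        L2_inner_const_lacunary L2_inner_const_trig)
next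
  case False
  then have "tilde a b n = (\<lambda>x. sqrt (1 - a^2) * lacunary a b n x)"
    by (simp add: fun_eq_iff tilde_odd)
  then show ?thesis
    by (simp add: L2_inner_cmult_right L2_inner_const_lacunary[OF a \<open>n \<ge> 1\<close>])
qed

lemma L2_orthonormal_tilde_family:
  assumes "\<bar>a\<bar> < 1"
  shows "L2_orthonormal (tilde_index N) (tilde_family a)"
  unfolding L2_orthonormal_def
proof (intro conjI ballI)
  fix i assume "i \<in> tilde_index N"
  then show "L2_01 (tilde_family a i)"
    using assms by (auto simp: tilde_family_def L2_01_tilde)
next
  fix i j assume "i \<in> tilde_index N" "j \<in> tilde_index N"
  then show "L2_inner (tilde_family a i) (tilde_family a j) = (if i = j then 1 else 0)"
    using assms
    by (cases i; cases j)
      (auto simp: tilde_index_def tilde_family_def L2_inner_tilde_tilde L2_inner_const_tilde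
        L2_sqnorm_const_one L2_inner_commute[of "tilde a _ _" "\<lambda>x. 1"])
qed

lemma proj_err_tilde_trig:
  assumes a: "\<bar>a\<bar> < 1" and "k \<ge> 1" "2 * k \<le> N"
  shows "proj_err (tilde_index N) (tilde_family a) (trig b k) = 0"
  using proj_err_eq[OF finite_tilde_index L2_orthonormal_tilde_family[OF a] L2_01_trig]
    sum_L2_inner_trig_tilde_sq[OF assms] L2_inner_trig[OF \<open>k \<ge> 1\<close> \<open>k \<ge> 1\<close>]
    L2_inner_const_trig[OF \<open>k \<ge> 1\<close>]
  by (simp add: sum_tilde_index tilde_family_def L2_inner_commute[of "trig b k" "\<lambda>x. 1"])

lemma proj_err_tilde_const:
  assumes a: "\<bar>a\<bar> < 1"
  shows "proj_err (tilde_index N) (tilde_family a) (\<lambda>x. 1) = 0"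
  using proj_err_eq[OF finite_tilde_index L2_orthonormal_tilde_family[OF a] L2_01_const]
  by (simp add: sum_tilde_index tilde_family_def L2_sqnorm_const_one L2_inner_const_tilde[OF a])

lemma coef_til_eq_L2_inner:
  assumes a: "\<bar>a\<bar> < 1" and h: "L2_01 h" and "n \<ge> 1"
    and coeff: "\<And>m. m \<ge> 1 \<Longrightarrow> \<alpha> m = L2_inner h (trig b m)"
  shows "coef_til a \<alpha> n = L2_inner h (tilde a b n)"
proof -
  have "(\<lambda>m. a^m * \<alpha> (n * 2^m)) sums L2_inner h (lacunary a b n)"
    using L2_inner_lacunary_sums[OF a h, of b n] coeff \<open>n \<ge> 1\<close> by (simp add: Suc_le_eq)
  then have series: "(\<Sum>m. a^m * \<alpha> (n * 2^m)) = L2_inner h (lacunary a b n)"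
    by (simp add: sums_iff)
  show ?thesis
  proof (cases "even n")
    case True
    then have "n div 2 \<ge> 1" using \<open>n \<ge> 1\<close> by auto
    have "tilde a b n = (\<lambda>x. (1 - a^2) * lacunary a b n x - a * trig b (n div 2) x)"
      using tilde_even[OF a True] by (simp add: fun_eq_iff)
    then show ?thesis
      using True \<open>n \<ge> 1\<close> coeff[OF \<open>n div 2 \<ge> 1\<close>]
      by (simp add: coef_til_def series L2_inner_diff_right L2_inner_cmult_right L2_01_cmult
          L2_01_lacunary L2_01_trig a h)
  next
    case False
    then have "tilde a b n = (\<lambda>x. sqrt (1 - a^2) * lacunary a b n x)"
      by (simp add: fun_eq_iff tilde_odd)
    then show ?thesis
      using False \<open>n \<ge> 1\<close> by (simp add: coef_til_def series L2_inner_cmult_right)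
  qed
qed

lemma proj_err_tilde_tendsto_zero:
  assumes a: "\<bar>a\<bar> < 1" and h: "L2_01 h"
  shows "(\<lambda>N. proj_err (tilde_index N) (tilde_family a) h) \<longlonglongrightarrow> 0"
proof (rule proj_err_tendsto_zero[OF finite_tilde_index L2_orthonormal_tilde_family[OF a] _ _ h])
  show "eventually (\<lambda>N. proj_err (tilde_index N) (tilde_family a) (\<lambda>x. 1) = 0) sequentially"
    using proj_err_tilde_const[OF a] by simp
  show "eventually (\<lambda>N. proj_err (tilde_index N) (tilde_family a) (trig b k) = 0) sequentially"
    if "k \<ge> 1" for b k
    using proj_err_tilde_trig[OF a that] by (auto simp: eventually_sequentially)
qed

lemma tilde_expansion_eq_orth_proj:
  assumes a: "\<bar>a\<bar> < 1" and h: "L2_01 h" and "\<alpha> 0 = L2_inner h (\<lambda>x. 1)"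
    and "\<And>m. m \<ge> 1 \<Longrightarrow> \<alpha> m = L2_inner h (trig True m)"
    and "\<And>m. m \<ge> 1 \<Longrightarrow> \<beta> m = L2_inner h (trig False m)"
  shows "coef_til a \<alpha> 0 + (\<Sum>n\<in>{1..N}. coef_til a \<alpha> n * ctil a n x + coef_til a \<beta> n * stil a n x)
    = orth_proj (tilde_index N) (tilde_family a) h x"
proof -
  have "coef_til a \<alpha> n = L2_inner h (tilde a True n)" "coef_til a \<beta> n = L2_inner h (tilde a False n)"
    if "n \<ge> 1" for n
    using coef_til_eq_L2_inner[OF a h that] assms(4,5) by blast+
  then show ?thesis
    using assms(3) by (simp add: coef_til_def orth_proj_def sum_tilde_index tilde_family_def tilde_def)
qed

theorem theorem5p3:
  fixes a :: real and h :: "real \<Rightarrow> real" and \<alpha> \<beta> :: "nat \<Rightarrow> real"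
  assumes "\<bar>a\<bar> < 1"
    and "L2_01 h"
    and "\<alpha> 0 = integral {0..1} h"
    and "\<And>n. n \<ge> 1 \<Longrightarrow> \<alpha> n = integral {0..1} (\<lambda>x. h x * cfun n x)"
    and "\<And>n. n \<ge> 1 \<Longrightarrow> \<beta> n = integral {0..1} (\<lambda>x. h x * sfun n x)"
  shows "(\<lambda>N. integral {0..1} (\<lambda>x. (h x - (coef_til a \<alpha> 0
            + (\<Sum>n\<in>{1..N}. coef_til a \<alpha> n * ctil a n x + coef_til a \<beta> n * stil a n x)))^2))
         \<longlonglongrightarrow> 0"
proof -
  have "coef_til a \<alpha> 0 + (\<Sum>n\<in>{1..N}. coef_til a \<alpha> n * ctil a n x + coef_til a \<beta> n * stil a n x)
      = orth_proj (tilde_index N) (tilde_family a) h x" for N x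
    using assms by (intro tilde_expansion_eq_orth_proj) (simp_all add: L2_inner_def trig_def)
  then show ?thesis
    using proj_err_tilde_tendsto_zero[OF assms(1,2)]
    by (simp add: proj_err_def integral_power2_eq_L2_sqnorm)
qed

end
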